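(* (A weighted, repeated argument, double, less-than sum simplification.) For complex variables $x_0,\dots,x_q$, $q\ge0$, and $\tau\in\mathbb{R}$, $$\sum_{\substack{i,j=0\\ i\le j}}^{q}x_i\,e^{-\tau[x_0,\ldots,x_q,x_i,x_j]}=\Big(-\frac{\tau^2}{2}\frac{\partial}{\partial\tau}-\sum_{i=0}^{q}i\,\frac{\partial}{\partial x_i}\Big)e^{-\tau[x_0,\ldots,x_q]}.$$
   Context: For $t\in\mathbb{R}$ and numbers $y_0,\dots,y_p$ (repetitions allowed), $e^{t[y_0,\ldots,y_p]}$ denotes the divided difference of $f(x)=e^{tx}$, $f[y_0,\ldots,y_p]=\frac{1}{2\pi i}\oint_\Gamma\frac{f(x)}{\prod_{i=0}^p(x-y_i)}\,\mathrm{d}x$, $\Gamma$ a positively oriented contour enclosing all $y_i$; it is a smooth (indeed analytic) function of $t$ and of the $y_i$. The multiset $[x_0,\ldots,x_q,x_i,x_j]$ consists of $x_0,\ldots,x_q$ plus extra copies of $x_i$ and $x_j$. *)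

theory Defs
  imports "HOL-Complex_Analysis.Complex_Analysis"
begin

text \<open>Divided difference of f(x) = exp(t x) on the node multiset ys (a list, repetitions
allowed), defined via the contour integral
  (1 / (2 pi i)) \<ointegral>_\<Gamma> exp(t x) / \<Prod>(x - y_i) dx
with \<Gamma> the positively oriented circle about 0 of radius 1 + \<Sum>|y_i|, which encloses all nodes.\<close>

definition dd_radius :: "complex list \<Rightarrow> real" where
  "dd_radius ys = 1 + (\<Sum>y\<leftarrow>ys. norm y)"

definition exp_dd :: "complex \<Rightarrow> complex list \<Rightarrow> complex" where
  "exp_dd t ys = contour_integral (circlepath 0 (dd_radius ys))
      (\<lambda>x. exp (t * x) / (\<Prod>y\<leftarrow>ys. (x - y))) / (2 * pi * \<i>)"

end

(* Cauchy's formula represents every divided difference of exp on one circle \<Gamma> around the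
   nodes, with E(x) = exp(-\<tau> x) / \<Prod>k (x - x_k): the term x_i exp(-\<tau>[..., x_i, x_j]) has
   integrand x_i E / ((x - x_i)(x - x_j)), differentiating in x_i repeats the node x_i (a
   factor 1 / (x - x_i)), and differentiating in \<tau> gives a factor -x.  Put a_k = 1 / (x - x_k),
   A = \<Sum> a_k and B = \<Sum> a_k^2.  Since x_i a_i = x a_i - 1, the sum over i \<le> j equals
   E (x (A^2 + B) / 2 - \<Sum>j (j + 1) a_j), so the integrand of the difference of the two sides is
   E (x (A^2 + B) / 2 - A - \<tau>^2 x / 2).  This is the derivative of E (\<tau> x + 1 - x A) / 2, and an
   exact differential integrates to zero over the closed curve \<Gamma>. *)
theory Submission
  imports Defs
begin

lemma prod_list_map_conv_prod_nth: "(\<Prod>x\<leftarrow>xs. f x) = (\<Prod>k<length xs. f (xs ! k))"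
  by (simp add: prod.list_conv_set_nth atLeast0LessThan)

lemma sum_list_map_conv_sum_nth: "(\<Sum>x\<leftarrow>xs. f x) = (\<Sum>k<length xs. f (xs ! k))"
  by (simp add: sum.list_conv_set_nth atLeast0LessThan)

lemma prod_list_map_update:
  fixes f :: "'a \<Rightarrow> 'b::comm_monoid_mult"
  assumes "i < length xs"
  shows "(\<Prod>x\<leftarrow>xs[i := z]. f x) * f (xs ! i) = (\<Prod>x\<leftarrow>xs. f x) * f z"
  using assms
proof (induction xs arbitrary: i)
  case Nil
  then show ?case by simp
next
  case (Cons x xs)
  then show ?case by (cases i) (simp_all add: ac_simps)
qed

lemma sum_upper_triangle_mult:
  fixes a :: "nat \<Rightarrow> 'a::comm_semiring_1"
  shows "2 * (\<Sum>i<n. \<Sum>j\<in>{i..<n}. a i * a j) = (\<Sum>i<n. a i)^2 + (\<Sum>i<n. a i ^ 2)"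
proof (induction n)
  case 0
  then show ?case by simp
next
  case (Suc n)
  have "(\<Sum>i<Suc n. \<Sum>j\<in>{i..<Suc n}. a i * a j)
      = (\<Sum>i<n. \<Sum>j\<in>{i..<n}. a i * a j) + (\<Sum>i<n. a i) * a n + a n * a n"
    by (simp add: sum.distrib sum_distrib_right add.assoc)
  then show ?case
    using Suc by (simp add: power2_eq_square algebra_simps mult_2 mult_2_right)
qed

lemma sum_upper_triangle:
  fixes a :: "nat \<Rightarrow> 'a::comm_semiring_1"
  shows "(\<Sum>i<n. \<Sum>j\<in>{i..<n}. a j) = (\<Sum>j<n. of_nat (Suc j) * a j)"
proof (induction n)
  case 0
  then show ?case by simp
next
  case (Suc n)
  have "(\<Sum>i<Suc n. \<Sum>j\<in>{i..<Suc n}. a j) = (\<Sum>i<n. \<Sum>j\<in>{i..<n}. a j) + of_nat (Suc n) * a n"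
    by (simp add: sum.distrib algebra_simps)
  then show ?case
    using Suc by simp
qed

lemma contour_integral_concentric_circlepaths_eq:
  assumes holo: "f holomorphic_on {x. M < norm x}" and "M < r1" "M < r2"
  shows "contour_integral (circlepath 0 r1) f = contour_integral (circlepath 0 r2) f"
proof (rule Cauchy_theorem_homotopic_loops[OF _ _ holo])
  show "open {x::complex. M < norm x}"
    by (intro open_Collect_less continuous_intros)
  show "homotopic_loops {x. M < norm x} (circlepath 0 r1) (circlepath 0 r2)"
  proof (rule homotopic_loops_linear)
    fix t :: real
    define e where "e = exp (2 * of_real pi * \<i> * of_real t)"
    have "norm e = 1"
      unfolding e_def by simp
    show "closed_segment (circlepath 0 r1 t) (circlepath 0 r2 t) \<subseteq> {x. M < norm x}"
    proof
      fix w assume "w \<in> closed_segment (circlepath 0 r1 t) (circlepath 0 r2 t)"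
      then obtain u where u: "0 \<le> u" "u \<le> 1"
        and "w = (1 - u) *\<^sub>R circlepath 0 r1 t + u *\<^sub>R circlepath 0 r2 t"
        unfolding closed_segment_def by auto
      then have "w = of_real ((1 - u) * r1 + u * r2) * e"
        by (simp add: circlepath e_def scaleR_conv_of_real algebra_simps)
      then have "norm w = \<bar>(1 - u) * r1 + u * r2\<bar>"
        by (simp only: norm_mult norm_of_real \<open>norm e = 1\<close> mult_1_right)
      moreover have "M < (1 - u) * r1 + u * r2"
        using convex_bound_lt[of "-r1" "-M" "-r2" "1 - u" u] assms(2,3) u by simp
      ultimately show "w \<in> {x. M < norm x}" by simp
    qed
  qed auto
qed auto

lemma has_field_derivative_contour_integral_circlepath:
  fixes F F' :: "complex \<Rightarrow> complex \<Rightarrow> complex"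
  assumes U: "open U" "convex U" "w0 \<in> U" and "0 < r"
    and F: "\<And>w x. w \<in> U \<Longrightarrow> norm x = r \<Longrightarrow> ((\<lambda>w. F w x) has_field_derivative F' w x) (at w)"
    and cont_F: "\<And>w. w \<in> U \<Longrightarrow> continuous_on (sphere 0 r) (F w)"
    and cont_F': "continuous_on (U \<times> sphere 0 r) (\<lambda>(w, x). F' w x)"
  shows "((\<lambda>w. contour_integral (circlepath 0 r) (F w)) has_field_derivative
           contour_integral (circlepath 0 r) (F' w0)) (at w0)"
proof -
  define \<gamma> where "\<gamma> = circlepath 0 r"
  define \<gamma>' where "\<gamma>' = (\<lambda>t::real. 2 * pi * \<i> * r * exp (2 * of_real pi * \<i> * t))"
  have norm_\<gamma>: "norm (\<gamma> t) = r" for t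
    unfolding \<gamma>_def circlepath using \<open>0 < r\<close> by (simp add: norm_mult)
  have cont_\<gamma>: "continuous_on A \<gamma>" "continuous_on A \<gamma>'" for A
    unfolding \<gamma>_def \<gamma>'_def circlepath by (intro continuous_intros)+
  have integral_eq: "contour_integral \<gamma> G = integral (cbox 0 1) (\<lambda>t. G (\<gamma> t) * \<gamma>' t)" for G
    unfolding contour_integral_integral \<gamma>_def \<gamma>'_def vector_derivative_circlepath by simp
  have "((\<lambda>w. integral (cbox 0 1) (\<lambda>t. F w (\<gamma> t) * \<gamma>' t)) has_field_derivative
          integral (cbox 0 1) (\<lambda>t. F' w0 (\<gamma> t) * \<gamma>' t)) (at w0 within U)"
  proof (rule leibniz_rule_field_derivative[OF _ _ _ U(3,2)])
    fix w t assume "w \<in> U"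
    show "((\<lambda>w. F w (\<gamma> t) * \<gamma>' t) has_field_derivative F' w (\<gamma> t) * \<gamma>' t) (at w within U)"
      using F[OF \<open>w \<in> U\<close> norm_\<gamma>] by (rule has_field_derivative_at_within[OF DERIV_cmult_right])
  next
    fix w assume "w \<in> U"
    have "continuous_on (cbox 0 1) (\<lambda>t. F w (\<gamma> t) * \<gamma>' t)"
      by (intro continuous_intros continuous_on_compose2[OF cont_F[OF \<open>w \<in> U\<close>] cont_\<gamma>(1)] cont_\<gamma>(2))
         (auto simp: norm_\<gamma>)
    then show "(\<lambda>t. F w (\<gamma> t) * \<gamma>' t) integrable_on cbox 0 1"
      by (rule integrable_continuous)
  next
    have "continuous_on (U \<times> cbox 0 1) (\<lambda>p. (\<lambda>(w, x). F' w x) (fst p, \<gamma> (snd p)))"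
      by (intro continuous_on_compose2[OF cont_F'] continuous_intros continuous_on_compose2[OF cont_\<gamma>(1)])
         (auto simp: norm_\<gamma>)
    then have "continuous_on (U \<times> cbox 0 1) (\<lambda>p. F' (fst p) (\<gamma> (snd p)) * \<gamma>' (snd p))"
      by (intro continuous_intros continuous_on_compose2[OF cont_\<gamma>(2)]) auto
    then show "continuous_on (U \<times> cbox 0 1) (\<lambda>(w, t). F' w (\<gamma> t) * \<gamma>' t)"
      by (simp add: case_prod_beta')
  qed
  then show ?thesis
    unfolding \<gamma>_def[symmetric] integral_eq using at_within_open[OF U(3,1)] by simp
qed

lemma has_field_derivative_cauchy_integral_circlepath:
  fixes g :: "complex \<Rightarrow> complex"
  assumes g: "continuous_on (sphere 0 r) g" and "norm w < r"
  shows "((\<lambda>z. contour_integral (circlepath 0 r) (\<lambda>x. g x / (x - z))) has_field_derivative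
           contour_integral (circlepath 0 r) (\<lambda>x. g x / (x - w)^2)) (at w)"
proof (rule has_field_derivative_contour_integral_circlepath
    [where U = "ball 0 r" and F' = "\<lambda>z x. g x / (x - z)^2"])
  show "open (ball 0 r)" "convex (ball (0::complex) r)" "w \<in> ball 0 r"
    using \<open>norm w < r\<close> by auto
  show "0 < r"
    using \<open>norm w < r\<close> norm_ge_zero[of w] by linarith
next
  fix z x :: complex
  assume "z \<in> ball 0 r" "norm x = r"
  then have "x - z \<noteq> 0"
    by auto
  then show "((\<lambda>z. g x / (x - z)) has_field_derivative g x / (x - z)^2) (at z)"
    by (auto intro!: derivative_eq_intros simp: power2_eq_square)
next
  fix z :: complex
  assume "z \<in> ball 0 r"
  then show "continuous_on (sphere 0 r) (\<lambda>x. g x / (x - z))"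
    by (intro continuous_intros g) auto
next
  show "continuous_on (ball 0 r \<times> sphere 0 r) (\<lambda>(z, x). g x / (x - z)^2)"
    unfolding case_prod_beta' by (intro continuous_intros continuous_on_compose2[OF g]) auto
qed

lemma norm_lt_dd_radius:
  assumes "y \<in> set ys"
  shows "norm y < dd_radius ys"
proof -
  have "norm y \<le> (\<Sum>y\<leftarrow>ys. norm y)"
    using assms by (intro member_le_sum_list) auto
  then show ?thesis
    unfolding dd_radius_def by simp
qed

lemma dd_radius_pos: "0 < dd_radius ys"
proof -
  have "0 \<le> (\<Sum>y\<leftarrow>ys. norm y)"
    by (intro sum_list_nonneg) auto
  then show ?thesis
    unfolding dd_radius_def by simp
qed

definition exp_dd_integrand :: "complex \<Rightarrow> complex list \<Rightarrow> complex \<Rightarrow> complex" where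
  "exp_dd_integrand t ys x = exp (t * x) / (\<Prod>y\<leftarrow>ys. x - y)"

lemma exp_dd_eq_contour_integral:
  "exp_dd t ys = contour_integral (circlepath 0 (dd_radius ys)) (exp_dd_integrand t ys) / (2 * pi * \<i>)"
  unfolding exp_dd_def exp_dd_integrand_def ..

lemma exp_dd_integrand_Nil: "exp_dd_integrand t [] = (\<lambda>x. exp (t * x))"
  by (simp add: exp_dd_integrand_def fun_eq_iff)

lemma exp_dd_integrand_Cons: "exp_dd_integrand t (y # ys) = (\<lambda>x. exp_dd_integrand t ys x / (x - y))"
  by (simp add: exp_dd_integrand_def fun_eq_iff mult.commute)

lemma exp_dd_integrand_append:
  "exp_dd_integrand t (ys @ zs) x = exp_dd_integrand t ys x / (\<Prod>z\<leftarrow>zs. x - z)"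
  by (simp add: exp_dd_integrand_def)

lemma exp_dd_integrand_update:
  assumes "i < length ys" "x \<notin> set ys"
  shows "exp_dd_integrand t (ys[i := z]) x = exp_dd_integrand t ys x * (x - ys ! i) / (x - z)"
proof -
  have "x - ys ! i \<noteq> 0"
    using assms by auto
  have "exp_dd_integrand t ys x * (x - ys ! i) / (x - z)
      = exp (t * x) * (x - ys ! i) / ((\<Prod>y\<leftarrow>ys. x - y) * (x - z))"
    by (simp add: exp_dd_integrand_def)
  also have "\<dots> = exp (t * x) * (x - ys ! i) / ((\<Prod>y\<leftarrow>ys[i := z]. x - y) * (x - ys ! i))"
    by (simp only: prod_list_map_update[OF assms(1)])
  also have "\<dots> = exp_dd_integrand t (ys[i := z]) x"
    using \<open>x - ys ! i \<noteq> 0\<close> by (simp add: exp_dd_integrand_def)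
  finally show ?thesis ..
qed

lemma holomorphic_on_exp_dd_integrand: "exp_dd_integrand t ys holomorphic_on - set ys"
  unfolding exp_dd_integrand_def[abs_def] prod_list_map_conv_prod_nth
  by (intro holomorphic_intros) auto

lemma continuous_on_exp_dd_integrand:
  assumes "S \<subseteq> - set ys"
  shows "continuous_on S (exp_dd_integrand t ys)"
  using holomorphic_on_subset[OF holomorphic_on_exp_dd_integrand assms]
  by (rule holomorphic_on_imp_continuous_on)

lemma has_field_derivative_exp_dd_integrand:
  assumes "x \<notin> set ys"
  shows "(exp_dd_integrand t ys has_field_derivative
           exp_dd_integrand t ys x * (t - (\<Sum>y\<leftarrow>ys. 1 / (x - y)))) (at x)"
  using assms
proof (induction ys)
  case Nil
  then show ?case
    by (auto simp: exp_dd_integrand_Nil intro!: derivative_eq_intros)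
next
  case (Cons y ys)
  then have "x - y \<noteq> 0" by simp
  with Cons show ?case
    unfolding exp_dd_integrand_Cons
    by (auto intro!: derivative_eq_intros simp: field_simps power2_eq_square)
qed

lemma has_field_derivative_sum_list_reciprocals:
  assumes "x \<notin> set ys"
  shows "((\<lambda>x. \<Sum>y\<leftarrow>ys. 1 / (x - y)) has_field_derivative - (\<Sum>y\<leftarrow>ys. 1 / (x - y)^2)) (at x)"
  using assms
proof (induction ys)
  case Nil
  then show ?case by simp
next
  case (Cons y ys)
  then have "x - y \<noteq> 0" by simp
  with Cons show ?case
    by (auto intro!: derivative_eq_intros simp: field_simps power2_eq_square)
qed

lemma has_contour_integral_exp_dd:
  assumes "\<forall>y\<in>set ys. norm y < r" and "0 < r"
  shows "(exp_dd_integrand t ys has_contour_integral 2 * pi * \<i> * exp_dd t ys) (circlepath 0 r)"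
proof -
  define M where "M = Max (insert 0 (norm ` set ys))"
  have "M < r" "M < dd_radius ys"
    using assms norm_lt_dd_radius dd_radius_pos by (auto simp: M_def)
  have "{x. M < norm x} \<subseteq> - set ys"
    by (auto simp: M_def)
  then have holo: "exp_dd_integrand t ys holomorphic_on {x. M < norm x}"
    by (rule holomorphic_on_subset[OF holomorphic_on_exp_dd_integrand])
  have "open {x::complex. M < norm x}"
    by (intro open_Collect_less continuous_intros)
  then have "exp_dd_integrand t ys contour_integrable_on circlepath 0 r"
    by (rule contour_integrable_holomorphic_simple[OF holo]) (use \<open>M < r\<close> in auto)
  moreover have "contour_integral (circlepath 0 r) (exp_dd_integrand t ys) = 2 * pi * \<i> * exp_dd t ys"
    unfolding exp_dd_eq_contour_integral
    using contour_integral_concentric_circlepaths_eq[OF holo \<open>M < r\<close> \<open>M < dd_radius ys\<close>] by simp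
  ultimately show ?thesis
    by (metis has_contour_integral_integral)
qed

lemma has_contour_integral_exp_dd_subset:
  assumes "set ys \<subseteq> set xs"
  shows "(exp_dd_integrand t ys has_contour_integral 2 * pi * \<i> * exp_dd t ys) (circlepath 0 (dd_radius xs))"
  using assms norm_lt_dd_radius dd_radius_pos by (intro has_contour_integral_exp_dd) auto

lemma has_field_derivative_exp_dd:
  "((\<lambda>t. exp_dd t ys) has_field_derivative
      contour_integral (circlepath 0 (dd_radius ys)) (\<lambda>x. x * exp_dd_integrand t ys x) / (2 * pi * \<i>))
    (at t)"
proof -
  let ?r = "dd_radius ys"
  have off_nodes: "x \<notin> set ys" if "norm x = ?r" for x
    using that norm_lt_dd_radius by fastforce
  have "((\<lambda>t. contour_integral (circlepath 0 ?r) (exp_dd_integrand t ys)) has_field_derivative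
          contour_integral (circlepath 0 ?r) (\<lambda>x. x * exp_dd_integrand t ys x)) (at t)"
  proof (rule has_field_derivative_contour_integral_circlepath[OF open_UNIV convex_UNIV UNIV_I dd_radius_pos])
    fix w x :: complex
    assume "norm x = ?r"
    then have "(\<Prod>y\<leftarrow>ys. x - y) \<noteq> 0"
      using off_nodes by (auto simp: prod_list_zero_iff)
    then show "((\<lambda>w. exp_dd_integrand w ys x) has_field_derivative x * exp_dd_integrand w ys x) (at w)"
      unfolding exp_dd_integrand_def by (auto intro!: derivative_eq_intros)
  next
    fix w :: complex
    show "continuous_on (sphere 0 ?r) (exp_dd_integrand w ys)"
      using off_nodes by (intro continuous_on_exp_dd_integrand) auto
  next
    show "continuous_on (UNIV \<times> sphere 0 ?r) (\<lambda>(w, x). x * exp_dd_integrand w ys x)"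
      unfolding exp_dd_integrand_def prod_list_map_conv_prod_nth case_prod_beta'
      using off_nodes by (intro continuous_intros) (auto dest: nth_mem)
  qed
  then show ?thesis
    unfolding exp_dd_eq_contour_integral by (rule DERIV_cdivide)
qed

lemma has_contour_integral_exp_dd_vector_derivative:
  "((\<lambda>x. x * exp_dd_integrand (- complex_of_real \<tau>) ys x) has_contour_integral
      - (2 * pi * \<i>) * vector_derivative (\<lambda>s::real. exp_dd (- complex_of_real s) ys) (at \<tau>))
    (circlepath 0 (dd_radius ys))"
proof -
  let ?\<Gamma> = "circlepath 0 (dd_radius ys)"
  let ?g = "\<lambda>x. x * exp_dd_integrand (- complex_of_real \<tau>) ys x"
  have "path_image ?\<Gamma> \<subseteq> - set ys"
    using dd_radius_pos[of ys] by (auto dest: norm_lt_dd_radius)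
  then have integrable: "?g contour_integrable_on ?\<Gamma>"
    using holomorphic_on_exp_dd_integrand finite_imp_closed[OF finite_set, of ys]
    by (intro contour_integrable_holomorphic_simple[where S = "- set ys"] holomorphic_intros) auto
  have "((\<lambda>s::real. - complex_of_real s) has_vector_derivative -1) (at \<tau>)"
    by (auto intro!: derivative_eq_intros)
  from field_vector_diff_chain_at[OF this has_field_derivative_exp_dd]
  have "vector_derivative (\<lambda>s::real. exp_dd (- complex_of_real s) ys) (at \<tau>)
      = - (contour_integral ?\<Gamma> ?g / (2 * pi * \<i>))"
    unfolding o_def by (simp add: vector_derivative_at)
  with integrable show ?thesis
    by (simp add: has_contour_integral_integral)
qed

lemma has_contour_integral_exp_dd_update:
  assumes i: "i < length ys" and nodes: "\<forall>y\<in>set ys. norm y < r" and "norm z < r"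
  shows "((\<lambda>x. exp_dd_integrand t ys x * (x - ys ! i) / (x - z)) has_contour_integral
           2 * pi * \<i> * exp_dd t (ys[i := z])) (circlepath 0 r)"
proof -
  have "0 < r"
    using \<open>norm z < r\<close> norm_ge_zero by (rule le_less_trans[rotated])
  have "\<forall>y\<in>set (ys[i := z]). norm y < r"
    using set_update_subset_insert[of ys i z] nodes \<open>norm z < r\<close> by blast
  from has_contour_integral_exp_dd[OF this \<open>0 < r\<close>, of t]
  show ?thesis
    by (rule has_contour_integral_eq) (use \<open>0 < r\<close> i nodes in \<open>auto simp: exp_dd_integrand_update\<close>)
qed

lemma has_field_derivative_exp_dd_update:
  assumes i: "i < length ys"
  shows "((\<lambda>z. exp_dd t (ys[i := z])) has_field_derivative exp_dd t (ys @ [ys ! i])) (at (ys ! i))"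
proof -
  define r where "r = dd_radius ys + 1"
  define g where "g x = exp_dd_integrand t ys x * (x - ys ! i)" for x
  have nodes: "\<forall>y\<in>set ys. norm y < r"
    using norm_lt_dd_radius by (fastforce simp: r_def)
  have "0 < r"
    using dd_radius_pos[of ys] by (simp add: r_def)
  have "continuous_on (sphere 0 r) g"
    unfolding g_def using nodes by (intro continuous_intros continuous_on_exp_dd_integrand) auto
  then have "((\<lambda>z. contour_integral (circlepath 0 r) (\<lambda>x. g x / (x - z))) has_field_derivative
      contour_integral (circlepath 0 r) (\<lambda>x. g x / (x - ys ! i)^2)) (at (ys ! i))"
    using nodes nth_mem[OF i] by (intro has_field_derivative_cauchy_integral_circlepath) auto
  moreover have "contour_integral (circlepath 0 r) (\<lambda>x. g x / (x - ys ! i)^2)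
      = 2 * pi * \<i> * exp_dd t (ys @ [ys ! i])"
  proof (rule contour_integral_unique, rule has_contour_integral_eq)
    show "(exp_dd_integrand t (ys @ [ys ! i]) has_contour_integral 2 * pi * \<i> * exp_dd t (ys @ [ys ! i]))
        (circlepath 0 r)"
      using \<open>0 < r\<close> nodes nth_mem[OF i] by (intro has_contour_integral_exp_dd) auto
  qed (use \<open>0 < r\<close> nodes in \<open>auto simp: g_def exp_dd_integrand_append power2_eq_square\<close>)
  ultimately have deriv: "((\<lambda>z. contour_integral (circlepath 0 r) (\<lambda>x. g x / (x - z)) / (2 * pi * \<i>))
      has_field_derivative exp_dd t (ys @ [ys ! i])) (at (ys ! i))"
    by (auto dest: DERIV_cdivide[where c = "2 * pi * \<i>"])
  have near: "exp_dd t (ys[i := z]) = contour_integral (circlepath 0 r) (\<lambda>x. g x / (x - z)) / (2 * pi * \<i>)"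
    if "z \<in> ball 0 r" for z
    using has_contour_integral_exp_dd_update[OF i nodes, of z t] that
    unfolding g_def by (simp add: contour_integral_unique)
  show ?thesis
    using nodes nth_mem[OF i]
    by (intro has_field_derivative_transform_within_open[OF deriv, where S = "ball 0 r"]) (auto simp: near)
qed

lemma has_field_derivative_exp_dd_primitive:
  fixes \<tau> x :: complex
  assumes x: "x \<notin> set xs"
  shows "((\<lambda>x. exp_dd_integrand (- \<tau>) xs x * (\<tau> * x + 1 - x * (\<Sum>y\<leftarrow>xs. 1 / (x - y))) / 2)
    has_field_derivative
      (\<Sum>i<length xs. \<Sum>j\<in>{i..<length xs}. xs ! i * exp_dd_integrand (- \<tau>) (xs @ [xs ! i, xs ! j]) x)
      - \<tau>^2 / 2 * (x * exp_dd_integrand (- \<tau>) xs x)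
      + (\<Sum>i<length xs. of_nat i * exp_dd_integrand (- \<tau>) (xs @ [xs ! i]) x)) (at x)"
proof -
  define n where "n = length xs"
  define E where "E = exp_dd_integrand (- \<tau>) xs x"
  define a where "a k = 1 / (x - xs ! k)" for k
  define A where "A = (\<Sum>y\<leftarrow>xs. 1 / (x - y))"
  define B where "B = (\<Sum>y\<leftarrow>xs. 1 / (x - y)^2)"
  have A_nth: "A = (\<Sum>k<n. a k)" and B_nth: "B = (\<Sum>k<n. a k ^ 2)"
    by (simp_all add: A_def B_def a_def n_def sum_list_map_conv_sum_nth power_one_over)
  have x_ne: "x - xs ! k \<noteq> 0" if "k < n" for k
    using x nth_mem[OF that[unfolded n_def]] by auto
  have pair: "xs ! i * exp_dd_integrand (- \<tau>) (xs @ [xs ! i, xs ! j]) x = E * (x * (a i * a j) - a j)"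
    if "i < n" for i j
  proof -
    have "x * a i - 1 = xs ! i * a i"
      using x_ne[OF that] by (simp add: a_def field_simps)
    then have "E * (x * (a i * a j) - a j) = xs ! i * (E * a i * a j)"
      by (metis mult.assoc mult.commute right_diff_distrib mult_1_right)
    then show ?thesis
      by (simp add: E_def a_def exp_dd_integrand_append)
  qed
  have deriv: "((\<lambda>x. exp_dd_integrand (- \<tau>) xs x * (\<tau> * x + 1 - x * (\<Sum>y\<leftarrow>xs. 1 / (x - y))) / 2)
      has_field_derivative E * (x * ((A^2 + B) / 2) - A - \<tau>^2 / 2 * x)) (at x)"
    unfolding E_def A_def B_def
    by (rule derivative_eq_intros has_field_derivative_exp_dd_integrand[OF x]
          has_field_derivative_sum_list_reciprocals[OF x] refl | simp)+
       (simp add: field_simps power2_eq_square)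
  have "(\<Sum>i<n. \<Sum>j\<in>{i..<n}. xs ! i * exp_dd_integrand (- \<tau>) (xs @ [xs ! i, xs ! j]) x)
      = (\<Sum>i<n. \<Sum>j\<in>{i..<n}. E * (x * (a i * a j) - a j))"
    by (intro sum.cong refl) (simp add: pair)
  also have "\<dots> = E * (x * (\<Sum>i<n. \<Sum>j\<in>{i..<n}. a i * a j) - (\<Sum>i<n. \<Sum>j\<in>{i..<n}. a j))"
    by (simp add: sum_distrib_left sum_subtractf right_diff_distrib mult.assoc)
  also have "\<dots> = E * (x * ((A^2 + B) / 2) - A - (\<Sum>j<n. of_nat j * a j))"
    using sum_upper_triangle_mult[of a n]
    by (simp add: sum_upper_triangle A_nth B_nth distrib_right sum.distrib field_simps)
  finally have pairs: "(\<Sum>i<n. \<Sum>j\<in>{i..<n}. xs ! i * exp_dd_integrand (- \<tau>) (xs @ [xs ! i, xs ! j]) x)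
      = E * (x * ((A^2 + B) / 2) - A - (\<Sum>j<n. of_nat j * a j))" .
  have nodes: "(\<Sum>i<n. of_nat i * exp_dd_integrand (- \<tau>) (xs @ [xs ! i]) x) = E * (\<Sum>j<n. of_nat j * a j)"
    by (simp add: sum_distrib_left E_def a_def exp_dd_integrand_append mult.commute)
  show ?thesis
    unfolding n_def[symmetric] pairs nodes
    by (rule DERIV_cong[OF deriv]) (simp add: E_def algebra_simps)
qed

theorem lemma4:
  fixes xs :: "complex list" and \<tau> :: real
  assumes "xs \<noteq> []"
  shows "(\<Sum>i<length xs. \<Sum>j\<in>{i..<length xs}.
            xs ! i * exp_dd (- complex_of_real \<tau>) (xs @ [xs ! i, xs ! j]))
       = - (complex_of_real (\<tau>^2) / 2) *
            vector_derivative (\<lambda>s::real. exp_dd (- complex_of_real s) xs) (at \<tau>)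
         - (\<Sum>i<length xs. of_nat i *
            deriv (\<lambda>z. exp_dd (- complex_of_real \<tau>) (xs[i := z])) (xs ! i))"
proof -
  define t where "t = - complex_of_real \<tau>"
  define \<Gamma> where "\<Gamma> = circlepath 0 (dd_radius xs)"
  define c :: complex where "c = 2 * pi * \<i>"
  let ?n = "length xs"
  let ?v = "vector_derivative (\<lambda>s::real. exp_dd (- complex_of_real s) xs) (at \<tau>)"
  note sub_integral = has_contour_integral_exp_dd_subset[where xs = xs and t = t, folded \<Gamma>_def c_def]
  have nodes: "(exp_dd_integrand t (xs @ [xs ! i]) has_contour_integral
      c * deriv (\<lambda>z. exp_dd t (xs[i := z])) (xs ! i)) \<Gamma>" if "i < ?n" for i
    using that sub_integral[of "xs @ [xs ! i]"]
    by (simp add: DERIV_imp_deriv[OF has_field_derivative_exp_dd_update])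
  note moment = has_contour_integral_exp_dd_vector_derivative[of \<tau> xs, folded t_def \<Gamma>_def c_def]
  let ?\<Phi> = "\<lambda>x. (\<Sum>i<?n. \<Sum>j\<in>{i..<?n}. xs ! i * exp_dd_integrand t (xs @ [xs ! i, xs ! j]) x)
      - (complex_of_real \<tau>)^2 / 2 * (x * exp_dd_integrand t xs x)
      + (\<Sum>i<?n. of_nat i * exp_dd_integrand t (xs @ [xs ! i]) x)"
  have "(?\<Phi> has_contour_integral 0) \<Gamma>"
  proof (rule Cauchy_theorem_primitive[where S = "- set xs"])
    fix x assume "x \<in> - set xs"
    with has_field_derivative_exp_dd_primitive[of x xs "complex_of_real \<tau>"]
    show "((\<lambda>x. exp_dd_integrand t xs x * (complex_of_real \<tau> * x + 1 - x * (\<Sum>y\<leftarrow>xs. 1 / (x - y))) / 2)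
        has_field_derivative ?\<Phi> x) (at x within - set xs)"
      unfolding t_def by (simp add: has_field_derivative_at_within)
  qed (use dd_radius_pos[of xs] in \<open>auto simp: \<Gamma>_def dest: norm_lt_dd_radius\<close>)
  moreover have "(?\<Phi> has_contour_integral
      (\<Sum>i<?n. \<Sum>j\<in>{i..<?n}. xs ! i * (c * exp_dd t (xs @ [xs ! i, xs ! j])))
      - (complex_of_real \<tau>)^2 / 2 * (- c * ?v)
      + (\<Sum>i<?n. of_nat i * (c * deriv (\<lambda>z. exp_dd t (xs[i := z])) (xs ! i)))) \<Gamma>"
    by (intro has_contour_integral_add has_contour_integral_diff has_contour_integral_sum
          has_contour_integral_lmul finite_lessThan finite_atLeastLessThan sub_integral nodes moment) auto
  ultimately have "c * ((\<Sum>i<?n. \<Sum>j\<in>{i..<?n}. xs ! i * exp_dd t (xs @ [xs ! i, xs ! j]))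
      + (\<Sum>i<?n. of_nat i * deriv (\<lambda>z. exp_dd t (xs[i := z])) (xs ! i))
      + (complex_of_real \<tau>)^2 / 2 * ?v) = 0"
    using has_contour_integral_unique by (fastforce simp: algebra_simps sum_distrib_left)
  then show ?thesis
    unfolding t_def of_real_power eq_diff_eq mult_minus_left eq_neg_iff_add_eq_0
    by (simp add: c_def)
qed

end
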